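(* Let $\mu$ be a distribution on $\{0,1\}^{\mathbb{N}}$, let $X=(X_i)_{i\in\mathbb{N}}\sim\mu$ be defined on a probability space $(\Omega,\mathcal{F},\mathbb{P})$, and suppose $(\mathbb{N},\xi)$ is totally bounded. Suppose there exists $K\ge1$ such that for every $\varepsilon>0$ there exist events $(E_k)_{k\in\mathbb{N}}$ in $\mathcal{F}$ and a finite sequence of random variables $(Z_j)_{j\in[J]}$ defined on $(\Omega,\mathcal{F},\mathbb{P})$ with: (1) $\mathbb{P}(E_k)\le\varepsilon$ for all $k\in\mathbb{N}$; (2) $\sup_{k\in\mathbb{N}}\frac{\log(k+1)}{\log(1/\mathbb{P}(E_k))}<\infty$; (3) for every $i\in\mathbb{N}$ there exist $j\in[J]$ and $\mathcal{K}\subset\mathbb{N}$ with $|\mathcal{K}|\le K$ and $\{X_i\neq Z_j\}\subset\bigcup_{k\in\mathcal{K}}E_k$. Then $\Delta_n(\mu)\to0$ as $n\to\infty$.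
   Context: $\xi(i,j):=\mathbb{P}(X_i\neq X_j)$; $(\mathbb{N},\xi)$ is totally bounded if for every $\varepsilon>0$ there is a finite $S\subset\mathbb{N}$ such that every $i$ has $s\in S$ with $\xi(i,s)\le\varepsilon$. $[J]=\{1,\dots,J\}$. For $n\ge1$, with $X^{(1)},\dots,X^{(n)}$ i.i.d. from $\mu$, $\Delta_n(\mu):=\mathbb{E}\sup_{j\in\mathbb{N}}\left|\frac1n\sum_{i=1}^nX^{(i)}_j-\mathbb{E}[X_j]\right|$. In (2), $\log(1/0)=\infty$. *)

theory Defs
  imports "HOL-Probability.Probability"
begin

abbreviation seq_space :: "(nat \<Rightarrow> bool) measure" where
  "seq_space \<equiv> PiM UNIV (\<lambda>_. count_space UNIV)"

definition xi :: "'a measure \<Rightarrow> ('a \<Rightarrow> nat \<Rightarrow> bool) \<Rightarrow> nat \<Rightarrow> nat \<Rightarrow> real" where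
  "xi M X i j = measure M {\<omega> \<in> space M. X \<omega> i \<noteq> X \<omega> j}"

definition xi_totally_bounded :: "'a measure \<Rightarrow> ('a \<Rightarrow> nat \<Rightarrow> bool) \<Rightarrow> bool" where
  "xi_totally_bounded M X \<longleftrightarrow>
     (\<forall>\<epsilon>>0. \<exists>S. finite S \<and> (\<forall>i. \<exists>s\<in>S. xi M X i s \<le> \<epsilon>))"

text \<open>Delta_n(mu) = E sup_j |(1/n) sum_{i=1}^n X^(i)_j - E[X_j]| with X^(1..n) iid mu
  (the n samples are indexed by {..<n}).\<close>
definition Delta :: "nat \<Rightarrow> (nat \<Rightarrow> bool) measure \<Rightarrow> real" where
  "Delta n \<mu> = integral\<^sup>L (PiM {..<n} (\<lambda>_. \<mu>))
     (\<lambda>\<omega>. SUP j. \<bar>(\<Sum>i<n. of_bool (\<omega> i j)) / real n - integral\<^sup>L \<mu> (\<lambda>x. of_bool (x j))\<bar>)"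

text \<open>The quantity log(k+1)/log(1/p) in extended reals, with log(1/0) = infinity
  (ratio 0) and log(1/1) = 0 (ratio infinity).\<close>
definition log_ratio :: "nat \<Rightarrow> real \<Rightarrow> ereal" where
  "log_ratio k p = (if p = 0 then 0 else if p = 1 then \<infinity>
                    else ereal (ln (real k + 1) / ln (1 / p)))"

end

theory Submission
  imports Defs
begin

(* Let X^(1), ..., X^(n) be independent copies of X.  By (3), every coordinate i shares its
   approximant Z_j with a representative coordinate r(i) from a finite set, so X_i and X_r(i)
   differ only on at most 2K of the events E_k.  Hence the deviation of the i-th empirical mean
   from its expectation is at most that of r(i), plus 2K times the largest empirical frequency of
   an E_k, plus 2K eps.  The finitely many representatives obey the weak law of large numbers.
   By a Chernoff bound, some E_k has empirical frequency at least delta with probability at most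
   sum_k (2 P(E_k)^delta)^n, and (2) says P(E_k) <= (k+1)^(-1/C), so this sum decays
   exponentially in n once eps is small compared to delta. *)

section \<open>Empirical means\<close>

definition empirical_mean :: "nat \<Rightarrow> ('a \<Rightarrow> real) \<Rightarrow> (nat \<Rightarrow> 'a) \<Rightarrow> real" where
  "empirical_mean n f \<omega> = (\<Sum>m<n. f (\<omega> m)) / real n"

definition deviation :: "'a measure \<Rightarrow> nat \<Rightarrow> ('a \<Rightarrow> real) \<Rightarrow> (nat \<Rightarrow> 'a) \<Rightarrow> real" where
  "deviation M n f \<omega> = \<bar>empirical_mean n f \<omega> - integral\<^sup>L M f\<bar>"

definition sup_deviation :: "'a measure \<Rightarrow> ('a \<Rightarrow> nat \<Rightarrow> bool) \<Rightarrow> nat \<Rightarrow> (nat \<Rightarrow> 'a) \<Rightarrow> real" where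
  "sup_deviation M X n \<omega> = (SUP j. deviation M n (\<lambda>x. of_bool (X x j)) \<omega>)"

definition visits :: "nat \<Rightarrow> 'a set \<Rightarrow> (nat \<Rightarrow> 'a) \<Rightarrow> nat" where
  "visits n A \<omega> = (\<Sum>m<n. of_bool (\<omega> m \<in> A))"

lemma Delta_eq_integral_sup_deviation:
  "Delta n \<mu> = (\<integral>\<omega>. sup_deviation \<mu> (\<lambda>x. x) n \<omega> \<partial>PiM {..<n} (\<lambda>_. \<mu>))"
  by (simp add: Delta_def sup_deviation_def deviation_def empirical_mean_def)

lemma empirical_mean_mono:
  "(\<And>m. m < n \<Longrightarrow> f (\<omega> m) \<le> g (\<omega> m)) \<Longrightarrow> empirical_mean n f \<omega> \<le> empirical_mean n g \<omega>"
  unfolding empirical_mean_def by (intro divide_right_mono sum_mono) auto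

lemma empirical_mean_nonneg: "(\<And>m. m < n \<Longrightarrow> 0 \<le> f (\<omega> m)) \<Longrightarrow> 0 \<le> empirical_mean n f \<omega>"
  unfolding empirical_mean_def by (auto intro!: divide_nonneg_nonneg sum_nonneg)

lemma empirical_mean_le_one: "(\<And>m. m < n \<Longrightarrow> f (\<omega> m) \<le> 1) \<Longrightarrow> empirical_mean n f \<omega> \<le> 1"
  using sum_bounded_above[of "{..<n}" "\<lambda>m. f (\<omega> m)" 1]
  by (cases "n = 0") (auto simp: empirical_mean_def divide_le_eq)

lemma empirical_mean_diff:
  "empirical_mean n (\<lambda>x. f x - g x) \<omega> = empirical_mean n f \<omega> - empirical_mean n g \<omega>"
  by (simp add: empirical_mean_def sum_subtractf diff_divide_distrib)

lemma empirical_mean_sum: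
  "empirical_mean n (\<lambda>x. \<Sum>k\<in>C. f k x) \<omega> = (\<Sum>k\<in>C. empirical_mean n (f k) \<omega>)"
  by (simp add: empirical_mean_def sum.swap[of _ C] sum_divide_distrib)

lemma abs_empirical_mean_le: "\<bar>empirical_mean n f \<omega>\<bar> \<le> empirical_mean n (\<lambda>x. \<bar>f x\<bar>) \<omega>"
  unfolding empirical_mean_def by (simp add: divide_right_mono)

lemma empirical_mean_indicator: "empirical_mean n (indicator A) \<omega> = visits n A \<omega> / n"
  by (simp add: empirical_mean_def visits_def indicator_def)

lemma power_visits: "l ^ visits n A \<omega> = (\<Prod>m<n. if \<omega> m \<in> A then l else 1)"
  unfolding visits_def power_sum by (intro prod.cong) auto

lemma abs_le_add_square_div:
  fixes y \<nu> :: real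
  assumes "\<nu> > 0"
  shows "\<bar>y\<bar> \<le> \<nu> + y\<^sup>2 / \<nu>"
proof -
  have "2 * \<nu> * \<bar>y\<bar> \<le> \<nu>\<^sup>2 + y\<^sup>2"
    using sum_squares_bound[of "\<nu>" "\<bar>y\<bar>"] by (simp add: power2_eq_square)
  moreover have "0 \<le> \<nu> * \<bar>y\<bar>"
    using assms by simp
  ultimately have "\<nu> * \<bar>y\<bar> \<le> \<nu>\<^sup>2 + y\<^sup>2"
    by linarith
  then show ?thesis
    using assms by (simp add: field_simps power2_eq_square)
qed

section \<open>Independent samples\<close>

context prob_space
begin

abbreviation samples :: "nat \<Rightarrow> (nat \<Rightarrow> 'a) measure" where
  "samples n \<equiv> PiM {..<n} (\<lambda>_. M)"

lemma prob_space_samples: "prob_space (samples n)"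
  by (intro prob_space_PiM) (simp add: prob_space_axioms)

lemma space_samples_coordinate: "\<omega> \<in> space (samples n) \<Longrightarrow> m < n \<Longrightarrow> \<omega> m \<in> space M"
  by (auto simp: space_PiM)

lemma measurable_samples_coordinate:
  "f \<in> M \<rightarrow>\<^sub>M N \<Longrightarrow> m < n \<Longrightarrow> (\<lambda>\<omega>. f (\<omega> m)) \<in> samples n \<rightarrow>\<^sub>M N"
  using measurable_compose[OF measurable_component_singleton[of m "{..<n}" "\<lambda>_. M"]] by simp

lemma borel_measurable_empirical_mean [measurable]:
  "f \<in> borel_measurable M \<Longrightarrow> empirical_mean n f \<in> borel_measurable (samples n)"
  unfolding empirical_mean_def[abs_def]
  by (intro borel_measurable_divide borel_measurable_sum borel_measurable_const)
     (auto intro: measurable_samples_coordinate)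

lemma borel_measurable_deviation [measurable]:
  assumes [measurable]: "f \<in> borel_measurable M"
  shows "deviation M n f \<in> borel_measurable (samples n)"
  unfolding deviation_def[abs_def] by measurable

lemma
  fixes f :: "nat \<Rightarrow> 'a \<Rightarrow> real"
  assumes "\<And>m. m < n \<Longrightarrow> integrable M (f m)"
  shows integrable_prod_samples: "integrable (samples n) (\<lambda>\<omega>. \<Prod>m<n. f m (\<omega> m))"
    and integral_prod_samples:
      "(\<integral>\<omega>. (\<Prod>m<n. f m (\<omega> m)) \<partial>samples n) = (\<Prod>m<n. expectation (f m))"
proof -
  interpret product_sigma_finite "\<lambda>_. M"
    by (simp add: product_sigma_finite_def sigma_finite_measure_axioms)
  show "integrable (samples n) (\<lambda>\<omega>. \<Prod>m<n. f m (\<omega> m))"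
    using assms by (intro product_integrable_prod) auto
  show "(\<integral>\<omega>. (\<Prod>m<n. f m (\<omega> m)) \<partial>samples n) = (\<Prod>m<n. expectation (f m))"
    using assms by (intro product_integral_prod) auto
qed

lemma
  fixes g :: "'a \<Rightarrow> real"
  assumes [measurable]: "g \<in> borel_measurable M" and square_integrable: "integrable M (\<lambda>x. (g x)\<^sup>2)"
    and centered: "expectation g = 0" and "a < n" "b < n"
  shows integrable_mult_samples: "integrable (samples n) (\<lambda>\<omega>. g (\<omega> a) * g (\<omega> b))"
    and integral_mult_samples:
      "(\<integral>\<omega>. g (\<omega> a) * g (\<omega> b) \<partial>samples n) = (if a = b then expectation (\<lambda>x. (g x)\<^sup>2) else 0)"
proof -
  define h where "h m x = (if m = a then g x else 1) * (if m = b then g x else 1)" for m x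
  have "integrable M g"
    by (rule square_integrable_imp_integrable[OF _ square_integrable]) simp
  with square_integrable have integrable_h: "integrable M (h m)" for m
    by (cases "m = a"; cases "m = b") (simp_all add: h_def[abs_def] power2_eq_square)
  have product_h: "g (\<omega> a) * g (\<omega> b) = (\<Prod>m<n. h m (\<omega> m))" for \<omega>
    using \<open>a < n\<close> \<open>b < n\<close> by (simp add: h_def prod.distrib)
  show "integrable (samples n) (\<lambda>\<omega>. g (\<omega> a) * g (\<omega> b))"
    using integrable_h by (simp add: product_h integrable_prod_samples)
  have "(\<integral>\<omega>. g (\<omega> a) * g (\<omega> b) \<partial>samples n) = (\<Prod>m<n. expectation (h m))"
    using integrable_h by (simp add: product_h integral_prod_samples)
  also have "\<dots> = (if a = b then expectation (\<lambda>x. (g x)\<^sup>2) else 0)"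
  proof (cases "a = b")
    case True
    then have "expectation (h m) = (if m = a then expectation (\<lambda>x. (g x)\<^sup>2) else 1)" for m
      by (cases "m = a") (simp_all add: h_def[abs_def] power2_eq_square prob_space)
    then show ?thesis
      using \<open>a < n\<close> True by simp
  next
    case False
    then have "expectation (h a) = 0"
      by (simp add: h_def[abs_def] centered)
    then show ?thesis
      using False \<open>a < n\<close> by (auto intro: prod_zero)
  qed
  finally show "(\<integral>\<omega>. g (\<omega> a) * g (\<omega> b) \<partial>samples n) = (if a = b then expectation (\<lambda>x. (g x)\<^sup>2) else 0)" .
qed

lemma
  fixes g :: "'a \<Rightarrow> real"
  assumes [measurable]: "g \<in> borel_measurable M" and "integrable M (\<lambda>x. (g x)\<^sup>2)"
    and "expectation g = 0"
  shows integrable_square_sum_samples: "integrable (samples n) (\<lambda>\<omega>. (\<Sum>m<n. g (\<omega> m))\<^sup>2)"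
    and integral_square_sum_samples:
      "(\<integral>\<omega>. (\<Sum>m<n. g (\<omega> m))\<^sup>2 \<partial>samples n) = n * expectation (\<lambda>x. (g x)\<^sup>2)"
proof -
  have square_sum: "(\<Sum>m<n. g (\<omega> m))\<^sup>2 = (\<Sum>a<n. \<Sum>b<n. g (\<omega> a) * g (\<omega> b))" for \<omega>
    by (simp add: power2_eq_square sum_product)
  have integrable: "integrable (samples n) (\<lambda>\<omega>. g (\<omega> a) * g (\<omega> b))" if "a < n" "b < n" for a b
    using assms that by (rule integrable_mult_samples)
  then show "integrable (samples n) (\<lambda>\<omega>. (\<Sum>m<n. g (\<omega> m))\<^sup>2)"
    unfolding square_sum by (intro Bochner_Integration.integrable_sum) auto
  have "(\<integral>\<omega>. (\<Sum>m<n. g (\<omega> m))\<^sup>2 \<partial>samples n)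
      = (\<Sum>a<n. \<integral>\<omega>. (\<Sum>b<n. g (\<omega> a) * g (\<omega> b)) \<partial>samples n)"
    unfolding square_sum using integrable
    by (intro Bochner_Integration.integral_sum Bochner_Integration.integrable_sum) auto
  also have "\<dots> = (\<Sum>a<n. \<Sum>b<n. \<integral>\<omega>. g (\<omega> a) * g (\<omega> b) \<partial>samples n)"
    using integrable by (intro sum.cong refl Bochner_Integration.integral_sum) auto
  also have "\<dots> = n * expectation (\<lambda>x. (g x)\<^sup>2)"
    using assms by (simp add: integral_mult_samples)
  finally show "(\<integral>\<omega>. (\<Sum>m<n. g (\<omega> m))\<^sup>2 \<partial>samples n) = n * expectation (\<lambda>x. (g x)\<^sup>2)" .
qed

lemma integral_abs_empirical_mean_le:
  fixes g :: "'a \<Rightarrow> real"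
  assumes [measurable]: "g \<in> borel_measurable M" and g_bound: "\<And>x. \<bar>g x\<bar> \<le> 1"
    and centered: "expectation g = 0" and "n > 0" "\<nu> > 0"
  shows "(\<integral>\<omega>. \<bar>empirical_mean n g \<omega>\<bar> \<partial>samples n) \<le> \<nu> + 1 / (n * \<nu>)"
proof -
  interpret S: prob_space "samples n"
    by (rule prob_space_samples)
  have square_integrable: "integrable M (\<lambda>x. (g x)\<^sup>2)"
    using g_bound abs_square_le_1 by (intro integrable_const_bound[where B=1]) auto
  have "(\<integral>\<omega>. (\<Sum>m<n. g (\<omega> m))\<^sup>2 \<partial>samples n) = n * expectation (\<lambda>x. (g x)\<^sup>2)"
    using square_integrable centered by (rule integral_square_sum_samples[OF assms(1)])
  also have "\<dots> \<le> n"
    using square_integrable g_bound abs_square_le_1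
    by (intro mult_left_le integral_le_const) auto
  finally have variance: "(\<integral>\<omega>. (\<Sum>m<n. g (\<omega> m))\<^sup>2 \<partial>samples n) \<le> n" .
  have integrable_sum_square: "integrable (samples n) (\<lambda>\<omega>. (\<Sum>m<n. g (\<omega> m))\<^sup>2)"
    using square_integrable centered by (rule integrable_square_sum_samples[OF assms(1)])
  have "(\<integral>\<omega>. \<bar>empirical_mean n g \<omega>\<bar> \<partial>samples n)
      \<le> (\<integral>\<omega>. \<nu> + (\<Sum>m<n. g (\<omega> m))\<^sup>2 / (n\<^sup>2 * \<nu>) \<partial>samples n)"
  proof (rule integral_mono)
    have "\<bar>empirical_mean n g \<omega>\<bar> \<le> 1" for \<omega>
      using abs_empirical_mean_le[of n g \<omega>] empirical_mean_le_one[of n "\<lambda>x. \<bar>g x\<bar>" \<omega>] g_bound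
      by simp
    then show "integrable (samples n) (\<lambda>\<omega>. \<bar>empirical_mean n g \<omega>\<bar>)"
      by (intro S.integrable_const_bound[where B=1]) auto
    show "integrable (samples n) (\<lambda>\<omega>. \<nu> + (\<Sum>m<n. g (\<omega> m))\<^sup>2 / (n\<^sup>2 * \<nu>))"
      using integrable_sum_square by simp
    show "\<bar>empirical_mean n g \<omega>\<bar> \<le> \<nu> + (\<Sum>m<n. g (\<omega> m))\<^sup>2 / (n\<^sup>2 * \<nu>)" for \<omega>
      using abs_le_add_square_div[OF \<open>\<nu> > 0\<close>, of "empirical_mean n g \<omega>"]
      by (simp add: empirical_mean_def power_divide)
  qed
  also have "\<dots> = \<nu> + (\<integral>\<omega>. (\<Sum>m<n. g (\<omega> m))\<^sup>2 \<partial>samples n) / (n\<^sup>2 * \<nu>)"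
    using integrable_sum_square by (simp add: S.prob_space)
  also have "\<dots> \<le> \<nu> + n / (n\<^sup>2 * \<nu>)"
    using variance \<open>\<nu> > 0\<close> by (intro add_left_mono divide_right_mono) auto
  also have "\<dots> = \<nu> + 1 / (n * \<nu>)"
    by (simp add: power2_eq_square)
  finally show ?thesis .
qed

lemma expectation_unit_interval:
  fixes f :: "'a \<Rightarrow> real"
  assumes [measurable]: "f \<in> borel_measurable M" and "\<And>x. 0 \<le> f x" "\<And>x. f x \<le> 1"
  shows "0 \<le> expectation f" "expectation f \<le> 1"
proof -
  show "0 \<le> expectation f"
    by (rule Bochner_Integration.integral_nonneg) (simp add: assms)
  show "expectation f \<le> 1"
    using assms by (intro integral_le_const integrable_const_bound[where B=1]) auto
qed

lemma deviation_le_one: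
  assumes "f \<in> borel_measurable M" and "\<And>x. 0 \<le> f x" "\<And>x. f x \<le> 1"
  shows "deviation M n f \<omega> \<le> 1"
proof -
  have "0 \<le> empirical_mean n f \<omega>" "empirical_mean n f \<omega> \<le> 1"
    by (simp_all add: empirical_mean_nonneg empirical_mean_le_one assms)
  with expectation_unit_interval[OF assms] show ?thesis
    unfolding deviation_def by (auto simp: abs_le_iff)
qed

lemma integral_deviation_le:
  assumes [measurable]: "f \<in> borel_measurable M" and f_bounds: "\<And>x. 0 \<le> f x" "\<And>x. f x \<le> 1"
    and "n > 0" "\<nu> > 0"
  shows "(\<integral>\<omega>. deviation M n f \<omega> \<partial>samples n) \<le> \<nu> + 1 / (n * \<nu>)"
proof -
  define g where "g x = f x - expectation f" for x
  have [measurable]: "g \<in> borel_measurable M"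
    unfolding g_def by measurable
  have "expectation g = 0"
    using f_bounds unfolding g_def
    by (subst Bochner_Integration.integral_diff)
       (auto simp: prob_space intro!: integrable_const_bound[where B=1])
  moreover have "\<bar>g x\<bar> \<le> 1" for x
    using expectation_unit_interval[OF assms(1-3)] f_bounds[of x] by (simp add: g_def abs_le_iff)
  moreover have "deviation M n f \<omega> = \<bar>empirical_mean n g \<omega>\<bar>" for \<omega>
    using \<open>n > 0\<close> by (simp add: deviation_def g_def empirical_mean_def sum_subtractf field_simps)
  ultimately show ?thesis
    using integral_abs_empirical_mean_le[of g n \<nu>] \<open>n > 0\<close> \<open>\<nu> > 0\<close> by simp
qed

lemma
  fixes l :: real
  assumes [measurable]: "A \<in> events"
  shows integrable_power_visits: "integrable (samples n) (\<lambda>\<omega>. l ^ visits n A \<omega>)"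
    and integral_power_visits:
      "(\<integral>\<omega>. l ^ visits n A \<omega> \<partial>samples n) = (1 + prob A * (l - 1)) ^ n"
proof -
  define h where "h x = 1 + (l - 1) * indicator A x" for x
  have h_eq: "(if x \<in> A then l else 1) = h x" for x
    by (simp add: h_def)
  have "integrable M h"
    unfolding h_def by (simp add: less_top[symmetric])
  moreover have "expectation h = 1 + prob A * (l - 1)"
    unfolding h_def
    by (subst Bochner_Integration.integral_add) (auto simp: less_top[symmetric] prob_space)
  ultimately show "integrable (samples n) (\<lambda>\<omega>. l ^ visits n A \<omega>)"
    and "(\<integral>\<omega>. l ^ visits n A \<omega> \<partial>samples n) = (1 + prob A * (l - 1)) ^ n"
    using integrable_prod_samples[of n "\<lambda>_. h"] integral_prod_samples[of n "\<lambda>_. h"]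
    by (simp_all add: power_visits h_eq)
qed

lemma borel_measurable_visits [measurable]:
  "A \<in> events \<Longrightarrow> (\<lambda>\<omega>. real (visits n A \<omega>)) \<in> borel_measurable (samples n)"
  unfolding visits_def of_nat_sum
  by (intro borel_measurable_sum) (auto intro: measurable_samples_coordinate simp: of_bool_def)

lemma borel_measurable_power_visits [measurable]:
  "A \<in> events \<Longrightarrow> (\<lambda>\<omega>. l ^ visits n A \<omega> :: real) \<in> borel_measurable (samples n)"
  using integrable_power_visits by blast

lemma measure_visits_ge_null:
  fixes t :: real
  assumes [measurable]: "A \<in> events" and "prob A = 0" "t > 0"
  shows "measure (samples n) {\<omega> \<in> space (samples n). t \<le> visits n A \<omega>} = 0"
proof -
  interpret S: prob_space "samples n"
    by (rule prob_space_samples)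
  \<comment> \<open>\<open>0 ^ visits n A\<close> is the indicator of never visiting \<open>A\<close>.\<close>
  have "{\<omega> \<in> space (samples n). t \<le> visits n A \<omega>}
      \<subseteq> {\<omega> \<in> space (samples n). 1 \<le> 1 - (0::real) ^ visits n A \<omega>}"
  proof safe
    fix \<omega> assume "t \<le> visits n A \<omega>"
    then have "visits n A \<omega> > 0"
      using \<open>t > 0\<close> by (intro gr0I) simp
    then have "(0::real) ^ visits n A \<omega> = 0"
      by (rule zero_power)
    then show "1 \<le> 1 - (0::real) ^ visits n A \<omega>"
      by linarith
  qed
  then have "measure (samples n) {\<omega> \<in> space (samples n). t \<le> visits n A \<omega>}
      \<le> measure (samples n) {\<omega> \<in> space (samples n). 1 \<le> 1 - (0::real) ^ visits n A \<omega>}"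
    by (intro S.finite_measure_mono) measurable
  also have "\<dots> \<le> (\<integral>\<omega>. 1 - (0::real) ^ visits n A \<omega> \<partial>samples n) / 1"
    using integrable_power_visits[of A n 0]
    by (intro integral_Markov_inequality_measure[where A="space (samples n)"]) (auto simp: power_0_left)
  also have "\<dots> = 0"
    using integrable_power_visits[of A n 0] by (simp add: integral_power_visits \<open>prob A = 0\<close> S.prob_space)
  finally show ?thesis
    by (simp add: measure_le_0_iff)
qed

lemma measure_visits_ge_le:
  fixes t :: real
  assumes [measurable]: "A \<in> events" and "prob A > 0"
  shows "measure (samples n) {\<omega> \<in> space (samples n). t \<le> visits n A \<omega>} \<le> (2 - prob A) ^ n * prob A powr t"
proof -
  interpret S: prob_space "samples n"
    by (rule prob_space_samples)
  define l where "l = 1 / prob A"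
  have "l \<ge> 1"
    using \<open>prob A > 0\<close> by (simp add: l_def)
  then have "{\<omega> \<in> space (samples n). t \<le> visits n A \<omega>}
      \<subseteq> {\<omega> \<in> space (samples n). l powr t \<le> l ^ visits n A \<omega>}"
    by (auto simp: powr_realpow[symmetric] intro: powr_mono)
  then have "measure (samples n) {\<omega> \<in> space (samples n). t \<le> visits n A \<omega>}
      \<le> measure (samples n) {\<omega> \<in> space (samples n). l powr t \<le> l ^ visits n A \<omega>}"
    by (intro S.finite_measure_mono) measurable
  also have "\<dots> \<le> (\<integral>\<omega>. l ^ visits n A \<omega> \<partial>samples n) / l powr t"
    using \<open>l \<ge> 1\<close>
    by (intro integral_Markov_inequality_measure[where A="space (samples n)"] integrable_power_visits) auto
  also have "\<dots> = (1 + prob A * (l - 1)) ^ n / l powr t"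
    by (simp add: integral_power_visits)
  also have "\<dots> = (2 - prob A) ^ n * prob A powr t"
  proof -
    have "1 + prob A * (l - 1) = 2 - prob A" "l powr t = 1 / prob A powr t"
      using \<open>prob A > 0\<close> by (simp_all add: l_def field_simps powr_divide)
    then show ?thesis
      by simp
  qed
  finally show ?thesis .
qed

lemma measure_empirical_mean_ge_le:
  assumes [measurable]: "A \<in> events" and "\<delta> > 0" "n > 0"
  shows "measure (samples n) {\<omega> \<in> space (samples n). \<delta> \<le> empirical_mean n (indicator A) \<omega>}
    \<le> (2 * prob A powr \<delta>) ^ n"
proof -
  have "{\<omega> \<in> space (samples n). \<delta> \<le> empirical_mean n (indicator A) \<omega>}
      = {\<omega> \<in> space (samples n). \<delta> * n \<le> visits n A \<omega>}"
    using \<open>n > 0\<close> by (simp add: empirical_mean_indicator pos_le_divide_eq)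
  moreover have "measure (samples n) {\<omega> \<in> space (samples n). \<delta> * n \<le> visits n A \<omega>}
      \<le> (2 * prob A powr \<delta>) ^ n"
  proof (cases "prob A = 0")
    case True
    then show ?thesis
      using assms by (simp add: measure_visits_ge_null)
  next
    case False
    then have "prob A > 0"
      using measure_nonneg[of M A] by linarith
    then have "measure (samples n) {\<omega> \<in> space (samples n). \<delta> * n \<le> visits n A \<omega>}
        \<le> (2 - prob A) ^ n * prob A powr (\<delta> * n)"
      by (intro measure_visits_ge_le) auto
    also have "\<dots> \<le> (2 * prob A powr \<delta>) ^ n"
    proof -
      have "prob A powr (\<delta> * n) = (prob A powr \<delta>) ^ n"
        using \<open>prob A > 0\<close> by (simp add: powr_power mult.commute)
      moreover have "(2 - prob A) ^ n \<le> 2 ^ n"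
        using prob_le_1[of A] by (intro power_mono) (auto simp del: prob_le_1)
      ultimately show ?thesis
        by (simp add: power_mult_distrib mult_right_mono)
    qed
    finally show ?thesis .
  qed
  ultimately show ?thesis
    by simp
qed

lemma measure_exists_empirical_mean_ge_le:
  assumes [measurable]: "\<And>k. E k \<in> events" and "\<delta> > 0" "n > 0"
    and summable: "summable (\<lambda>k. (2 * prob (E k) powr \<delta>) ^ n)"
  shows "measure (samples n) {\<omega> \<in> space (samples n). \<exists>k. \<delta> \<le> empirical_mean n (indicator (E k)) \<omega>}
    \<le> (\<Sum>k. (2 * prob (E k) powr \<delta>) ^ n)"
proof -
  interpret S: prob_space "samples n"
    by (rule prob_space_samples)
  define U where "U k = {\<omega> \<in> space (samples n). \<delta> \<le> empirical_mean n (indicator (E k)) \<omega>}" for k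
  have U_sets: "U k \<in> sets (samples n)" for k
    unfolding U_def by measurable
  have U_le: "measure (samples n) (U k) \<le> (2 * prob (E k) powr \<delta>) ^ n" for k
    unfolding U_def using assms by (intro measure_empirical_mean_ge_le) auto
  have summable_U: "summable (\<lambda>k. measure (samples n) (U k))"
    by (rule summable_comparison_test'[OF summable]) (use U_le in simp)
  have "{\<omega> \<in> space (samples n). \<exists>k. \<delta> \<le> empirical_mean n (indicator (E k)) \<omega>} = (\<Union>k. U k)"
    by (auto simp: U_def)
  also have "measure (samples n) \<dots> \<le> (\<Sum>k. measure (samples n) (U k))"
    using U_sets summable_U by (intro S.finite_measure_subadditive_countably) auto
  also have "\<dots> \<le> (\<Sum>k. (2 * prob (E k) powr \<delta>) ^ n)"
    using U_le summable_U summable by (rule suminf_le)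
  finally show ?thesis .
qed

lemma
  assumes [measurable]: "X \<in> M \<rightarrow>\<^sub>M seq_space"
  shows sup_deviation_nonneg: "0 \<le> sup_deviation M X n \<omega>"
    and sup_deviation_le_one: "sup_deviation M X n \<omega> \<le> 1"
    and borel_measurable_sup_deviation: "sup_deviation M X n \<in> borel_measurable (samples n)"
proof -
  have deviation_le: "deviation M n (\<lambda>x. of_bool (X x j)) \<omega> \<le> 1" for j \<omega>
    by (rule deviation_le_one) auto
  then have bdd: "bdd_above (range (\<lambda>j. deviation M n (\<lambda>x. of_bool (X x j)) \<omega>))" for \<omega>
    by (intro bdd_aboveI[where M=1]) auto
  show "0 \<le> sup_deviation M X n \<omega>"
    unfolding sup_deviation_def deviation_def
    by (rule order_trans[OF abs_ge_zero cSUP_upper[OF UNIV_I bdd[unfolded deviation_def]]])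
  show "sup_deviation M X n \<omega> \<le> 1"
    unfolding sup_deviation_def using deviation_le by (intro cSUP_least) auto
  show "sup_deviation M X n \<in> borel_measurable (samples n)"
    unfolding sup_deviation_def[abs_def] using bdd by (intro borel_measurable_cSUP) auto
qed

lemma sup_deviation_distr_compose:
  assumes [measurable]: "X \<in> M \<rightarrow>\<^sub>M seq_space"
  shows "sup_deviation (distr M seq_space X) (\<lambda>x. x) n (compose {..<n} X \<omega>) = sup_deviation M X n \<omega>"
proof -
  have "(\<integral>x. of_bool (x j) \<partial>distr M seq_space X) = (\<integral>x. (of_bool (X x j) :: real) \<partial>M)" for j
    by (subst integral_distr) auto
  moreover have "empirical_mean n (\<lambda>x. of_bool (x j)) (compose {..<n} X \<omega>)
      = empirical_mean n (\<lambda>x. of_bool (X x j)) \<omega>" for j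
    by (simp add: empirical_mean_def compose_def)
  ultimately show ?thesis
    by (simp add: sup_deviation_def deviation_def)
qed

lemma Delta_distr_eq:
  assumes [measurable]: "X \<in> M \<rightarrow>\<^sub>M seq_space"
  shows "Delta n (distr M seq_space X) = (\<integral>\<omega>. sup_deviation M X n \<omega> \<partial>samples n)"
proof -
  define \<mu> where "\<mu> = distr M seq_space X"
  interpret \<mu>: prob_space \<mu>
    unfolding \<mu>_def by (rule prob_space_distr) simp
  have sets_\<mu>: "sets \<mu> = sets seq_space"
    by (simp add: \<mu>_def)
  have X_\<mu>: "X \<in> M \<rightarrow>\<^sub>M \<mu>"
    by (subst measurable_cong_sets[OF refl sets_\<mu>]) (rule assms)
  have "distr M \<mu> X = \<mu>"
    unfolding \<mu>_def by (rule distr_cong) auto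
  then have PiM_\<mu>: "PiM {..<n} (\<lambda>_. \<mu>) = distr (samples n) (PiM {..<n} (\<lambda>_. \<mu>)) (compose {..<n} X)"
    using X_\<mu> distr_PiM_finite_prob_space'[of "{..<n}" "\<lambda>_. M" "\<lambda>_. \<mu>" X]
    by (simp add: prob_space_axioms \<mu>.prob_space_axioms)
  have compose_measurable: "compose {..<n} X \<in> samples n \<rightarrow>\<^sub>M PiM {..<n} (\<lambda>_. \<mu>)"
    unfolding compose_def
    by (intro measurable_restrict) (auto intro: measurable_samples_coordinate[OF X_\<mu>])
  have "sup_deviation \<mu> (\<lambda>x. x) n \<in> borel_measurable (PiM {..<n} (\<lambda>_. \<mu>))"
    by (intro \<mu>.borel_measurable_sup_deviation measurable_ident_sets sets_\<mu>)
  then have "Delta n \<mu> = (\<integral>\<omega>. sup_deviation \<mu> (\<lambda>x. x) n (compose {..<n} X \<omega>) \<partial>samples n)"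
    unfolding Delta_eq_integral_sup_deviation by (subst PiM_\<mu>, rule integral_distr[OF compose_measurable])
  then show ?thesis
    by (simp add: \<mu>_def sup_deviation_distr_compose)
qed

lemma Delta_distr_nonneg: "X \<in> M \<rightarrow>\<^sub>M seq_space \<Longrightarrow> 0 \<le> Delta n (distr M seq_space X)"
  by (simp add: Delta_distr_eq sup_deviation_nonneg)

end

section \<open>Summability from the logarithmic condition\<close>

lemma powr_le_inverse_square_if_log_ratio_le:
  fixes p t C :: real
  assumes "0 \<le> p" "p \<le> 1" "log_ratio k p \<le> ereal C" "2 * C \<le> t"
  shows "p powr t \<le> 1 / (real k + 1)\<^sup>2"
proof (cases "p = 0")
  case False
  have "p \<noteq> 1"
    using assms(3) by (auto simp: log_ratio_def)
  with False assms(1,2) have p: "0 < p" "p < 1"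
    by auto
  have ln_pos: "0 < ln (1 / p)"
    using p by simp
  have "ln (real k + 1) / ln (1 / p) \<le> C"
    using assms(3) p by (simp add: log_ratio_def)
  then have "ln (real k + 1) \<le> C * ln (1 / p)"
    using ln_pos by (simp add: divide_le_eq)
  moreover have "2 * C * ln (1 / p) \<le> t * ln (1 / p)"
    using assms(4) ln_pos by (intro mult_right_mono) auto
  ultimately have "2 * ln (real k + 1) \<le> t * ln (1 / p)"
    by linarith
  then have "ln (p powr t) \<le> ln (1 / (real k + 1)\<^sup>2)"
    using p by (simp add: ln_div ln_realpow)
  then show ?thesis
    using p by (subst (asm) ln_le_cancel_iff) simp_all
qed simp

lemma two_powr_power_le:
  fixes p \<epsilon> \<delta> :: real
  assumes "0 \<le> p" "p \<le> \<epsilon>" "\<epsilon> powr (\<delta> / 2) \<le> 1 / 4" "\<delta> > 0" "n > 0"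
  shows "(2 * p powr \<delta>) ^ n \<le> (1 / 2) ^ n * p powr (\<delta> * n / 2)"
proof (cases "p = 0")
  case False
  then have "p > 0"
    using assms(1) by simp
  have "p powr (\<delta> / 2) \<le> 1 / 4"
    using assms powr_mono2[of "\<delta> / 2" p \<epsilon>] by simp
  have "p powr \<delta> = p powr (\<delta> / 2) * p powr (\<delta> / 2)"
    by (simp flip: powr_add)
  also have "\<dots> \<le> 1 / 4 * p powr (\<delta> / 2)"
    using \<open>p powr (\<delta> / 2) \<le> 1 / 4\<close> by (intro mult_right_mono) auto
  finally have "2 * p powr \<delta> \<le> 1 / 2 * p powr (\<delta> / 2)"
    by simp
  then have "(2 * p powr \<delta>) ^ n \<le> (1 / 2 * p powr (\<delta> / 2)) ^ n"
    by (intro power_mono) auto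
  also have "\<dots> = (1 / 2) ^ n * (p powr (\<delta> / 2)) ^ n"
    by (rule power_mult_distrib)
  also have "(p powr (\<delta> / 2)) ^ n = p powr (\<delta> * n / 2)"
    using \<open>p > 0\<close> by (simp add: powr_powr flip: powr_realpow)
  finally show ?thesis .
qed (use assms in \<open>simp add: power_0_left\<close>)

lemma summable_inverse_square: "summable (\<lambda>k::nat. 1 / (real k + 1)\<^sup>2)"
  using summable_Suc_iff[where f="\<lambda>k::nat. inverse (real k ^ 2)"] inverse_power_summable[of 2]
  by (simp add: inverse_eq_divide add.commute)

lemma suminf_two_powr_power_le:
  fixes p :: "nat \<Rightarrow> real"
  assumes "\<And>k. 0 \<le> p k" "\<And>k. p k \<le> \<epsilon>" "\<epsilon> powr (\<delta> / 2) \<le> 1 / 4" "\<delta> > 0" "n > 0"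
    and "\<And>k. log_ratio k (p k) \<le> ereal C" "4 * C \<le> \<delta> * n"
  shows "summable (\<lambda>k. (2 * p k powr \<delta>) ^ n)"
    and "(\<Sum>k. (2 * p k powr \<delta>) ^ n) \<le> (\<Sum>k. 1 / (real k + 1)\<^sup>2) * (1 / 2) ^ n"
proof -
  have "\<epsilon> < 1"
  proof (rule ccontr)
    assume "\<not> \<epsilon> < 1"
    then have "1 \<le> \<epsilon> powr (\<delta> / 2)"
      using \<open>\<delta> > 0\<close> by (intro ge_one_powr_ge_zero) auto
    then show False
      using assms(3) by simp
  qed
  have term_le: "(2 * p k powr \<delta>) ^ n \<le> 1 / (real k + 1)\<^sup>2 * (1 / 2) ^ n" for k
  proof -
    have "(2 * p k powr \<delta>) ^ n \<le> (1 / 2) ^ n * p k powr (\<delta> * n / 2)"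
      using assms by (intro two_powr_power_le) auto
    also have "\<dots> \<le> (1 / 2) ^ n * (1 / (real k + 1)\<^sup>2)"
      using assms \<open>\<epsilon> < 1\<close> order_trans[OF assms(2)[of k]]
      by (intro mult_left_mono powr_le_inverse_square_if_log_ratio_le) auto
    finally show ?thesis
      by (simp add: mult.commute)
  qed
  have summable: "summable (\<lambda>k. 1 / (real k + 1)\<^sup>2 * (1 / 2 :: real) ^ n)"
    by (intro summable_mult2 summable_inverse_square)
  show "summable (\<lambda>k. (2 * p k powr \<delta>) ^ n)"
    by (rule summable_comparison_test'[OF summable]) (use term_le in simp)
  then have "(\<Sum>k. (2 * p k powr \<delta>) ^ n) \<le> (\<Sum>k. 1 / (real k + 1)\<^sup>2 * (1 / 2) ^ n)"
    using term_le summable by (intro suminf_le)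
  then show "(\<Sum>k. (2 * p k powr \<delta>) ^ n) \<le> (\<Sum>k. 1 / (real k + 1)\<^sup>2) * (1 / 2) ^ n"
    using suminf_mult2[OF summable_inverse_square] by simp
qed

lemma eventually_suminf_two_powr_power_le:
  fixes p :: "nat \<Rightarrow> real"
  assumes "\<And>k. 0 \<le> p k" "\<And>k. p k \<le> \<epsilon>" "\<epsilon> powr (\<delta> / 2) \<le> 1 / 4" "\<delta> > 0"
    and "(SUP k. log_ratio k (p k)) < \<infinity>"
  shows "\<forall>\<^sub>F n in sequentially. summable (\<lambda>k. (2 * p k powr \<delta>) ^ n)
    \<and> (\<Sum>k. (2 * p k powr \<delta>) ^ n) \<le> (\<Sum>k. 1 / (real k + 1)\<^sup>2) * (1 / 2) ^ n"
proof -
  obtain C :: nat where "(SUP k. log_ratio k (p k)) < ereal C"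
    using assms(5) less_PInf_Ex_of_nat by auto
  then have log_ratio_le: "log_ratio k (p k) \<le> ereal C" for k
    by (meson SUP_upper UNIV_I order.trans less_imp_le)
  have "\<forall>\<^sub>F n in sequentially. 4 * C / \<delta> \<le> real n"
    using filterlim_real_sequentially by (simp add: filterlim_at_top)
  with eventually_gt_at_top[of 0] show ?thesis
  proof eventually_elim
    case (elim n)
    then have "4 * C \<le> \<delta> * n"
      using \<open>\<delta> > 0\<close> by (simp add: field_simps)
    with assms(1-4) elim log_ratio_le show ?case
      using suminf_two_powr_power_le[of p \<epsilon> \<delta> n C] by simp
  qed
qed

section \<open>Coordinates close to finitely many representatives\<close>

locale disagreement_cover = prob_space M
  for M :: "'a measure" +
  fixes X :: "'a \<Rightarrow> nat \<Rightarrow> bool" and E :: "nat \<Rightarrow> 'a set"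
    and R :: "nat set" and rep :: "nat \<Rightarrow> nat" and C :: "nat \<Rightarrow> nat set" and L :: nat
  assumes measurable_X [measurable]: "X \<in> M \<rightarrow>\<^sub>M seq_space"
    and sets_E [measurable]: "\<And>k. E k \<in> events"
    and finite_R: "finite R" and rep_in_R: "\<And>i. rep i \<in> R"
    and finite_C: "\<And>i. finite (C i)" and card_C_le: "\<And>i. card (C i) \<le> L"
    and disagreement_subset: "\<And>i. {x \<in> space M. X x i \<noteq> X x (rep i)} \<subseteq> (\<Union>k\<in>C i. E k)"
begin

abbreviation coordinate :: "nat \<Rightarrow> 'a \<Rightarrow> real" where
  "coordinate j x \<equiv> of_bool (X x j)"

definition overvisiting :: "nat \<Rightarrow> real \<Rightarrow> (nat \<Rightarrow> 'a) set" where
  "overvisiting n \<delta> = {\<omega> \<in> space (samples n). \<exists>k. \<delta> \<le> empirical_mean n (indicator (E k)) \<omega>}"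

lemma abs_coordinate_diff_le:
  assumes "x \<in> space M"
  shows "\<bar>coordinate i x - coordinate (rep i) x\<bar> \<le> (\<Sum>k\<in>C i. indicator (E k) x)"
proof (cases "X x i = X x (rep i)")
  case False
  then obtain k where "k \<in> C i" "x \<in> E k"
    using disagreement_subset[of i] assms by blast
  then have "1 \<le> (\<Sum>k\<in>C i. indicator (E k) x :: real)"
    using member_le_sum[of k "C i" "\<lambda>k. indicator (E k) x :: real"] finite_C by simp
  then show ?thesis
    by simp
qed (simp add: sum_nonneg)

lemma deviation_le_representative:
  assumes "\<omega> \<in> space (samples n)"
  shows "deviation M n (coordinate i) \<omega> \<le> deviation M n (coordinate (rep i)) \<omega>
    + (\<Sum>k\<in>C i. empirical_mean n (indicator (E k)) \<omega>) + (\<Sum>k\<in>C i. prob (E k))"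
proof -
  have "\<bar>empirical_mean n (coordinate i) \<omega> - empirical_mean n (coordinate (rep i)) \<omega>\<bar>
      = \<bar>empirical_mean n (\<lambda>x. coordinate i x - coordinate (rep i) x) \<omega>\<bar>"
    by (simp add: empirical_mean_diff)
  also have "\<dots> \<le> empirical_mean n (\<lambda>x. \<bar>coordinate i x - coordinate (rep i) x\<bar>) \<omega>"
    by (rule abs_empirical_mean_le)
  also have "\<dots> \<le> empirical_mean n (\<lambda>x. \<Sum>k\<in>C i. indicator (E k) x) \<omega>"
    using assms by (intro empirical_mean_mono abs_coordinate_diff_le space_samples_coordinate)
  also have "\<dots> = (\<Sum>k\<in>C i. empirical_mean n (indicator (E k)) \<omega>)"
    by (rule empirical_mean_sum)
  finally have empirical: "\<bar>empirical_mean n (coordinate i) \<omega> - empirical_mean n (coordinate (rep i)) \<omega>\<bar>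
    \<le> (\<Sum>k\<in>C i. empirical_mean n (indicator (E k)) \<omega>)" .
  have integrable_coordinate: "integrable M (coordinate j)" for j
    by (intro integrable_const_bound[where B=1]) auto
  have integrable_indicators: "integrable M (\<lambda>x. \<Sum>k\<in>C i. indicator (E k) x :: real)"
    by (simp add: less_top[symmetric])
  have "\<bar>expectation (coordinate i) - expectation (coordinate (rep i))\<bar>
      = \<bar>expectation (\<lambda>x. coordinate i x - coordinate (rep i) x)\<bar>"
    using integrable_coordinate by simp
  also have "\<dots> \<le> expectation (\<lambda>x. \<bar>coordinate i x - coordinate (rep i) x\<bar>)"
    by (rule integral_abs_bound)
  also have "\<dots> \<le> expectation (\<lambda>x. \<Sum>k\<in>C i. indicator (E k) x)"
    using integrable_coordinate integrable_indicators
    by (intro integral_mono abs_coordinate_diff_le) auto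
  also have "\<dots> = (\<Sum>k\<in>C i. prob (E k))"
    by (simp add: less_top[symmetric])
  finally have expected: "\<bar>expectation (coordinate i) - expectation (coordinate (rep i))\<bar>
    \<le> (\<Sum>k\<in>C i. prob (E k))" .
  from empirical expected show ?thesis
    unfolding deviation_def by linarith
qed

lemma empirical_mean_le_overvisiting:
  assumes "\<omega> \<in> space (samples n)" "0 \<le> \<delta>"
  shows "empirical_mean n (indicator (E k)) \<omega> \<le> \<delta> + indicator (overvisiting n \<delta>) \<omega>"
proof (cases "\<omega> \<in> overvisiting n \<delta>")
  case True
  have "empirical_mean n (indicator (E k)) \<omega> \<le> 1"
    by (rule empirical_mean_le_one) (simp add: indicator_def)
  then show ?thesis
    using True assms(2) by simp
next
  case False
  then show ?thesis
    using assms(1) by (auto simp: overvisiting_def not_le intro: less_imp_le)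
qed

lemma sup_deviation_le:
  fixes \<epsilon> \<delta> :: real
  assumes "\<omega> \<in> space (samples n)" "\<And>k. prob (E k) \<le> \<epsilon>" "0 \<le> \<delta>"
  shows "sup_deviation M X n \<omega>
    \<le> (\<Sum>r\<in>R. deviation M n (coordinate r) \<omega>) + L * (\<delta> + indicator (overvisiting n \<delta>) \<omega>) + L * \<epsilon>"
proof -
  have "0 \<le> \<epsilon>"
    using assms(2)[of 0] measure_nonneg[of M "E 0"] by linarith
  have "deviation M n (coordinate i) \<omega>
      \<le> (\<Sum>r\<in>R. deviation M n (coordinate r) \<omega>) + L * (\<delta> + indicator (overvisiting n \<delta>) \<omega>) + L * \<epsilon>"
    for i
  proof -
    have "deviation M n (coordinate (rep i)) \<omega> \<le> (\<Sum>r\<in>R. deviation M n (coordinate r) \<omega>)"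
      using finite_R rep_in_R by (intro member_le_sum) (auto simp: deviation_def)
    moreover have "(\<Sum>k\<in>C i. empirical_mean n (indicator (E k)) \<omega>)
        \<le> L * (\<delta> + indicator (overvisiting n \<delta>) \<omega>)"
    proof -
      have "(\<Sum>k\<in>C i. empirical_mean n (indicator (E k)) \<omega>)
          \<le> card (C i) * (\<delta> + indicator (overvisiting n \<delta>) \<omega>)"
        using empirical_mean_le_overvisiting[OF assms(1,3)] by (intro sum_bounded_above) auto
      also have "\<dots> \<le> L * (\<delta> + indicator (overvisiting n \<delta>) \<omega>)"
        using card_C_le[of i] assms(3) by (intro mult_right_mono) auto
      finally show ?thesis .
    qed
    moreover have "(\<Sum>k\<in>C i. prob (E k)) \<le> L * \<epsilon>"
    proof -
      have "(\<Sum>k\<in>C i. prob (E k)) \<le> card (C i) * \<epsilon>"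
        using assms(2) by (intro sum_bounded_above) auto
      also have "\<dots> \<le> L * \<epsilon>"
        using card_C_le[of i] \<open>0 \<le> \<epsilon>\<close> by (intro mult_right_mono) auto
      finally show ?thesis .
    qed
    ultimately show ?thesis
      using deviation_le_representative[OF assms(1), of i] by linarith
  qed
  then show ?thesis
    unfolding sup_deviation_def by (intro cSUP_least) auto
qed

lemma integral_sup_deviation_le:
  fixes \<epsilon> \<delta> \<nu> :: real
  assumes "\<And>k. prob (E k) \<le> \<epsilon>" "\<delta> > 0" "\<nu> > 0" "n > 0"
    and summable: "summable (\<lambda>k. (2 * prob (E k) powr \<delta>) ^ n)"
  shows "(\<integral>\<omega>. sup_deviation M X n \<omega> \<partial>samples n)
    \<le> card R * (\<nu> + 1 / (n * \<nu>)) + L * \<delta> + L * (\<Sum>k. (2 * prob (E k) powr \<delta>) ^ n) + L * \<epsilon>"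
proof -
  interpret S: prob_space "samples n"
    by (rule prob_space_samples)
  have integrable_deviation: "integrable (samples n) (deviation M n (coordinate j))" for j
    using deviation_le_one[of "coordinate j"]
    by (intro S.integrable_const_bound[where B=1]) (auto simp: deviation_def)
  have integrable_sup_deviation: "integrable (samples n) (sup_deviation M X n)"
    using sup_deviation_nonneg sup_deviation_le_one borel_measurable_sup_deviation
    by (intro S.integrable_const_bound[where B=1]) auto
  have overvisiting_sets: "overvisiting n \<delta> \<in> sets (samples n)"
    unfolding overvisiting_def by measurable
  then have integrable_overvisiting: "integrable (samples n) (indicator (overvisiting n \<delta>) :: _ \<Rightarrow> real)"
    by (simp add: less_top[symmetric])
  have "(\<integral>\<omega>. sup_deviation M X n \<omega> \<partial>samples n)
      \<le> (\<integral>\<omega>. (\<Sum>r\<in>R. deviation M n (coordinate r) \<omega>)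
          + L * (\<delta> + indicator (overvisiting n \<delta>) \<omega>) + L * \<epsilon> \<partial>samples n)"
    using integrable_sup_deviation integrable_deviation integrable_overvisiting
      sup_deviation_le[OF _ assms(1)] \<open>\<delta> > 0\<close>
    by (intro integral_mono) auto
  also have "\<dots> = (\<Sum>r\<in>R. \<integral>\<omega>. deviation M n (coordinate r) \<omega> \<partial>samples n)
      + L * \<delta> + L * measure (samples n) (overvisiting n \<delta>) + L * \<epsilon>"
    using integrable_deviation integrable_overvisiting overvisiting_sets
    by (simp add: S.prob_space distrib_left)
  also have "\<dots> \<le> card R * (\<nu> + 1 / (n * \<nu>)) + L * \<delta> + L * (\<Sum>k. (2 * prob (E k) powr \<delta>) ^ n) + L * \<epsilon>"
  proof -
    have "(\<Sum>r\<in>R. \<integral>\<omega>. deviation M n (coordinate r) \<omega> \<partial>samples n) \<le> card R * (\<nu> + 1 / (n * \<nu>))"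
      using assms(3,4) by (intro sum_bounded_above integral_deviation_le) auto
    moreover have "measure (samples n) (overvisiting n \<delta>) \<le> (\<Sum>k. (2 * prob (E k) powr \<delta>) ^ n)"
      unfolding overvisiting_def using assms(2,4) summable
      by (intro measure_exists_empirical_mean_ge_le) auto
    ultimately show ?thesis
      by (intro add_mono mult_left_mono order_refl) auto
  qed
  finally show ?thesis .
qed

lemma eventually_Delta_le:
  fixes \<epsilon> \<delta> \<nu> \<theta> :: real
  assumes "\<And>k. prob (E k) \<le> \<epsilon>" "\<epsilon> powr (\<delta> / 2) \<le> 1 / 4" "\<delta> > 0"
    and "(SUP k. log_ratio k (prob (E k))) < \<infinity>" and "\<nu> > 0" "\<theta> > 0"
  shows "\<forall>\<^sub>F n in sequentially. Delta n (distr M seq_space X) \<le> card R * \<nu> + L * \<delta> + L * \<epsilon> + \<theta>"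
proof -
  define c where "c = (\<Sum>k. 1 / (real k + 1)\<^sup>2)"
  have "(\<lambda>n. card R / \<nu> * inverse (real n) + L * c * (1 / 2) ^ n) \<longlonglongrightarrow> 0"
    by (intro tendsto_add_zero tendsto_mult_right_zero lim_inverse_n LIMSEQ_power_zero) auto
  then have "\<forall>\<^sub>F n in sequentially. card R / \<nu> * inverse (real n) + L * c * (1 / 2) ^ n < \<theta>"
    using \<open>\<theta> > 0\<close> by (rule order_tendstoD)
  moreover have "\<forall>\<^sub>F n in sequentially. summable (\<lambda>k. (2 * prob (E k) powr \<delta>) ^ n)
      \<and> (\<Sum>k. (2 * prob (E k) powr \<delta>) ^ n) \<le> c * (1 / 2) ^ n"
    unfolding c_def using assms(1-4) by (intro eventually_suminf_two_powr_power_le) auto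
  ultimately show ?thesis
    using eventually_gt_at_top[of 0]
  proof eventually_elim
    case (elim n)
    have "Delta n (distr M seq_space X) = (\<integral>\<omega>. sup_deviation M X n \<omega> \<partial>samples n)"
      by (rule Delta_distr_eq[OF measurable_X])
    also have "\<dots> \<le> card R * (\<nu> + 1 / (n * \<nu>)) + L * \<delta> + L * (\<Sum>k. (2 * prob (E k) powr \<delta>) ^ n) + L * \<epsilon>"
      using assms elim by (intro integral_sup_deviation_le) auto
    also have "\<dots> \<le> card R * \<nu> + L * \<delta> + L * \<epsilon> + (card R / \<nu> * inverse (real n) + L * c * (1 / 2) ^ n)"
    proof -
      have "card R * (\<nu> + 1 / (n * \<nu>)) = card R * \<nu> + card R / \<nu> * inverse (real n)"
        by (simp add: field_simps)
      moreover have "L * (\<Sum>k. (2 * prob (E k) powr \<delta>) ^ n) \<le> L * (c * (1 / 2) ^ n)"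
        using elim(2) by (intro mult_left_mono) auto
      ultimately show ?thesis
        by simp
    qed
    finally show ?case
      using elim(1) by linarith
  qed
qed

lemma eventually_Delta_less:
  fixes \<epsilon> \<delta> \<eta> :: real
  assumes "\<And>k. prob (E k) \<le> \<epsilon>" "\<epsilon> powr (\<delta> / 2) \<le> 1 / 4" "\<delta> > 0"
    and "(SUP k. log_ratio k (prob (E k))) < \<infinity>" and "L * \<delta> + L * \<epsilon> < \<eta>"
  shows "\<forall>\<^sub>F n in sequentially. Delta n (distr M seq_space X) < \<eta>"
proof -
  define \<gamma> where "\<gamma> = \<eta> - (L * \<delta> + L * \<epsilon>)"
  define \<nu> where "\<nu> = \<gamma> / (2 * (card R + 1))"
  have "\<gamma> > 0" "\<nu> > 0"
    using assms(5) by (simp_all add: \<gamma>_def \<nu>_def)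
  have "card R * \<nu> = \<gamma> / 2 * (card R / (card R + 1))"
    by (simp add: \<nu>_def)
  also have "\<dots> \<le> \<gamma> / 2"
    using \<open>\<gamma> > 0\<close> by (intro mult_left_le) auto
  finally have "card R * \<nu> \<le> \<gamma> / 2" .
  moreover have "\<forall>\<^sub>F n in sequentially. Delta n (distr M seq_space X) \<le> card R * \<nu> + L * \<delta> + L * \<epsilon> + \<gamma> / 4"
    using assms(1-4) \<open>\<nu> > 0\<close> \<open>\<gamma> > 0\<close> by (intro eventually_Delta_le) auto
  moreover have "\<eta> = L * \<delta> + L * \<epsilon> + \<gamma>"
    by (simp add: \<gamma>_def)
  ultimately show ?thesis
    using \<open>\<gamma> > 0\<close> by (elim eventually_mono) linarith
qed

end

definition rare_event_approximation :: "'a measure \<Rightarrow> ('a \<Rightarrow> nat \<Rightarrow> bool) \<Rightarrow> nat \<Rightarrow> real \<Rightarrow> bool" where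
  "rare_event_approximation M X K \<epsilon> \<longleftrightarrow>
    (\<exists>(E :: nat \<Rightarrow> 'a set) (J :: nat) (Z :: nat \<Rightarrow> 'a \<Rightarrow> real).
      (\<forall>k. E k \<in> sets M) \<and>
      (\<forall>j\<in>{1..J}. Z j \<in> borel_measurable M) \<and>
      (\<forall>k. measure M (E k) \<le> \<epsilon>) \<and>
      (SUP k. log_ratio k (measure M (E k))) < \<infinity> \<and>
      (\<forall>i. \<exists>j\<in>{1..J}. \<exists>\<K>. finite \<K> \<and> card \<K> \<le> K \<and>
         {\<omega> \<in> space M. of_bool (X \<omega> i) \<noteq> Z j \<omega>} \<subseteq> (\<Union>k\<in>\<K>. E k)))"

lemma (in prob_space) obtain_disagreement_cover:
  fixes Z :: "nat \<Rightarrow> 'a \<Rightarrow> real"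
  assumes "X \<in> M \<rightarrow>\<^sub>M seq_space" "\<And>k. E k \<in> events"
    and j: "\<And>i. j i \<in> {1..J}" and finite_\<K>: "\<And>i. finite (\<K> i)" and card_\<K>: "\<And>i. card (\<K> i) \<le> K"
    and approximation: "\<And>i. {\<omega> \<in> space M. of_bool (X \<omega> i) \<noteq> Z (j i) \<omega>} \<subseteq> (\<Union>k\<in>\<K> i. E k)"
  obtains R rep C where "disagreement_cover M X E R rep C (2 * K)"
proof -
  define pick where "pick a = (SOME i. j i = a)" for a
  define rep where "rep i = pick (j i)" for i
  have j_rep: "j (rep i) = j i" for i
    unfolding rep_def pick_def by (rule someI) (rule refl)
  have "disagreement_cover M X E (pick ` {1..J}) rep (\<lambda>i. \<K> i \<union> \<K> (rep i)) (2 * K)"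
  proof
    show "X \<in> M \<rightarrow>\<^sub>M seq_space" "E k \<in> events" for k
      by (fact assms(1), fact assms(2))
    show "finite (pick ` {1..J})" "rep i \<in> pick ` {1..J}" for i
      using j by (auto simp: rep_def)
    show "finite (\<K> i \<union> \<K> (rep i))" for i
      using finite_\<K> by simp
    show "card (\<K> i \<union> \<K> (rep i)) \<le> 2 * K" for i
      using card_Un_le[of "\<K> i" "\<K> (rep i)"] card_\<K>[of i] card_\<K>[of "rep i"] by linarith
    show "{x \<in> space M. X x i \<noteq> X x (rep i)} \<subseteq> (\<Union>k\<in>\<K> i \<union> \<K> (rep i). E k)" for i
    proof
      fix x assume x: "x \<in> {x \<in> space M. X x i \<noteq> X x (rep i)}"
      then have "of_bool (X x i) \<noteq> Z (j i) x \<or> of_bool (X x (rep i)) \<noteq> Z (j (rep i)) x"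
        using j_rep by auto
      then show "x \<in> (\<Union>k\<in>\<K> i \<union> \<K> (rep i). E k)"
        using approximation[of i] approximation[of "rep i"] x by blast
    qed
  qed
  then show ?thesis
    by (rule that)
qed

lemma (in prob_space) disagreement_cover_if_rare_event_approximation:
  assumes "X \<in> M \<rightarrow>\<^sub>M seq_space" "rare_event_approximation M X K \<epsilon>"
  obtains E R rep C where "disagreement_cover M X E R rep C (2 * K)"
    and "\<And>k. prob (E k) \<le> \<epsilon>" and "(SUP k. log_ratio k (prob (E k))) < \<infinity>"
proof -
  obtain E J and Z :: "nat \<Rightarrow> 'a \<Rightarrow> real"
    where sets_E: "\<And>k. E k \<in> events" and prob_E: "\<And>k. prob (E k) \<le> \<epsilon>"
      and log_ratio_E: "(SUP k. log_ratio k (prob (E k))) < \<infinity>"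
      and approximation: "\<forall>i. \<exists>j\<in>{1..J}. \<exists>\<K>. finite \<K> \<and> card \<K> \<le> K \<and>
         {\<omega> \<in> space M. of_bool (X \<omega> i) \<noteq> Z j \<omega>} \<subseteq> (\<Union>k\<in>\<K>. E k)"
    using assms(2) unfolding rare_event_approximation_def by blast
  define approximates where "approximates i j' \<K>' \<longleftrightarrow> finite \<K>' \<and> card \<K>' \<le> K \<and>
      {\<omega> \<in> space M. of_bool (X \<omega> i) \<noteq> Z j' \<omega>} \<subseteq> (\<Union>k\<in>\<K>'. E k)" for i j' \<K>'
  from approximation have "\<forall>i. \<exists>j'. j' \<in> {1..J} \<and> (\<exists>\<K>'. approximates i j' \<K>')"
    unfolding approximates_def Bex_def .
  then obtain j where j: "\<forall>i. j i \<in> {1..J} \<and> (\<exists>\<K>'. approximates i (j i) \<K>')"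
    by (rule choice[THEN exE])
  then have "\<forall>i. \<exists>\<K>'. approximates i (j i) \<K>'"
    by blast
  then obtain \<K> where "\<forall>i. approximates i (j i) (\<K> i)"
    by (rule choice[THEN exE])
  with j have "j i \<in> {1..J}" "finite (\<K> i)" "card (\<K> i) \<le> K"
    "{\<omega> \<in> space M. of_bool (X \<omega> i) \<noteq> Z (j i) \<omega>} \<subseteq> (\<Union>k\<in>\<K> i. E k)" for i
    unfolding approximates_def by blast+
  then obtain R rep C where cover: "disagreement_cover M X E R rep C (2 * K)"
    by (rule obtain_disagreement_cover[OF assms(1) sets_E])
  show ?thesis
    by (rule that[OF cover prob_E log_ratio_E])
qed

lemma eventually_Delta_distr_less:
  fixes \<eta> :: real
  assumes "prob_space M" "X \<in> M \<rightarrow>\<^sub>M seq_space" "K \<ge> 1"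
    and approximation: "\<And>\<epsilon>. \<epsilon> > 0 \<Longrightarrow> rare_event_approximation M X K \<epsilon>"
    and "\<eta> > 0"
  shows "\<forall>\<^sub>F n in sequentially. Delta n (distr M seq_space X) < \<eta>"
proof -
  interpret prob_space M
    by fact
  define \<delta> where "\<delta> = \<eta> / (8 * K)"
  define \<epsilon> where "\<epsilon> = min \<delta> ((1 / 4) powr (2 / \<delta>))"
  have "\<delta> > 0"
    using assms by (simp add: \<delta>_def)
  then have "\<epsilon> > 0" "\<epsilon> \<le> \<delta>"
    by (simp_all add: \<epsilon>_def)
  have "\<epsilon> powr (\<delta> / 2) \<le> ((1 / 4) powr (2 / \<delta>)) powr (\<delta> / 2)"
    using \<open>\<epsilon> > 0\<close> \<open>\<delta> > 0\<close> by (intro powr_mono2) (auto simp: \<epsilon>_def)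
  also have "\<dots> = 1 / 4"
    using \<open>\<delta> > 0\<close> by (simp add: powr_powr)
  finally have "\<epsilon> powr (\<delta> / 2) \<le> 1 / 4" .
  have "(2 * K) * \<delta> + (2 * K) * \<epsilon> < \<eta>"
    using mult_left_mono[OF \<open>\<epsilon> \<le> \<delta>\<close>, of "2 * K"] \<open>K \<ge> 1\<close> \<open>\<eta> > 0\<close> by (simp add: \<delta>_def)
  obtain E R rep C where "disagreement_cover M X E R rep C (2 * K)"
    and "\<And>k. prob (E k) \<le> \<epsilon>" and "(SUP k. log_ratio k (prob (E k))) < \<infinity>"
    using disagreement_cover_if_rare_event_approximation[OF assms(2) approximation[OF \<open>\<epsilon> > 0\<close>]]
    by blast
  then show ?thesis
    using \<open>\<epsilon> powr (\<delta> / 2) \<le> 1 / 4\<close> \<open>\<delta> > 0\<close> \<open>(2 * K) * \<delta> + (2 * K) * \<epsilon> < \<eta>\<close>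
    by (intro disagreement_cover.eventually_Delta_less) auto
qed

theorem corollary19:
  fixes M :: "'a measure" and X :: "'a \<Rightarrow> nat \<Rightarrow> bool" and \<mu> :: "(nat \<Rightarrow> bool) measure"
  assumes "prob_space M"
    and "X \<in> M \<rightarrow>\<^sub>M seq_space"
    and "\<mu> = distr M seq_space X"
    and "xi_totally_bounded M X"
    and "\<exists>K::nat. K \<ge> 1 \<and> (\<forall>\<epsilon>::real. \<epsilon> > 0 \<longrightarrow>
           (\<exists>(E :: nat \<Rightarrow> 'a set) (J :: nat) (Z :: nat \<Rightarrow> 'a \<Rightarrow> real).
              (\<forall>k. E k \<in> sets M) \<and>
              (\<forall>j\<in>{1..J}. Z j \<in> borel_measurable M) \<and>
              (\<forall>k. measure M (E k) \<le> \<epsilon>) \<and>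
              (SUP k. log_ratio k (measure M (E k))) < \<infinity> \<and>
              (\<forall>i. \<exists>j\<in>{1..J}. \<exists>\<K>. finite \<K> \<and> card \<K> \<le> K \<and>
                 {\<omega> \<in> space M. of_bool (X \<omega> i) \<noteq> Z j \<omega>} \<subseteq> (\<Union>k\<in>\<K>. E k))))"
  shows "(\<lambda>n. Delta n \<mu>) \<longlonglongrightarrow> 0"
proof (rule order_tendstoI)
  obtain K :: nat where "K \<ge> 1" and approximation: "\<And>\<epsilon>. \<epsilon> > 0 \<Longrightarrow> rare_event_approximation M X K \<epsilon>"
    using assms(5) unfolding rare_event_approximation_def by blast
  show "\<forall>\<^sub>F n in sequentially. Delta n \<mu> < \<eta>" if "\<eta> > 0" for \<eta> :: real
    unfolding assms(3) by (rule eventually_Delta_distr_less[OF assms(1,2) \<open>K \<ge> 1\<close> approximation that])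
  show "\<forall>\<^sub>F n in sequentially. \<eta> < Delta n \<mu>" if "\<eta> < 0" for \<eta> :: real
    using prob_space.Delta_distr_nonneg[OF assms(1,2)] that unfolding assms(3) by (simp add: less_le_trans)
qed

end
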